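(* Let $T>0$ and let $g:[0,T]\to\mathbb R$ be a right-continuous nondecreasing function such that $g(t)-g(t-)\le\frac12$ for all $t\in(0,T]$. Then the Kurzweil integral equation $$y(t)=1+\int_0^t y(\tau)\,\mathrm dg(\tau)\quad\forall t\in[0,T]$$ has a unique nondecreasing right-continuous solution $y:[0,T]\to[1,\infty)$, and $y(t)\le \mathrm e^{2(g(T)-g(0))}$ for all $t\in[0,T]$.
   Context: The integral is the Kurzweil integral: $J=\int_a^b f(t)\,\mathrm dg(t)$ if for every $\varepsilon>0$ there is a gauge $\delta:[a,b]\to(0,\infty)$ such that $|J-\sum_{j=1}^m f(\tau_j)(g(t_j)-g(t_{j-1}))|<\varepsilon$ for every partition $a=t_0<\dots<t_m=b$, $\tau_j\in[t_{j-1},t_j]$, with $[t_{j-1},t_j]\subset(\tau_j-\delta(\tau_j),\tau_j+\delta(\tau_j))$ for all $j$, $t_{j-1}<\tau_j$ for $j\ge2$, and $\tau_j<t_j$ for $j\le m-1$. $g(t-)$ denotes the left limit. *)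

theory Defs
  imports "HOL-Analysis.Analysis"
begin

definition kurzweil_fine ::
  "(real \<Rightarrow> real) \<Rightarrow> real \<Rightarrow> real \<Rightarrow> nat \<Rightarrow> (nat \<Rightarrow> real) \<Rightarrow> (nat \<Rightarrow> real) \<Rightarrow> bool" where
  "kurzweil_fine \<delta> a b m t \<tau> \<longleftrightarrow>
     t 0 = a \<and> t m = b \<and>
     (\<forall>j\<in>{1..m}. t (j - 1) < t j \<and> t (j - 1) \<le> \<tau> j \<and> \<tau> j \<le> t j \<and>
        \<tau> j - \<delta> (\<tau> j) < t (j - 1) \<and> t j < \<tau> j + \<delta> (\<tau> j)) \<and>
     (\<forall>j\<in>{2..m}. t (j - 1) < \<tau> j) \<and>
     (\<forall>j\<in>{1..m - 1}. \<tau> j < t j)"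

definition kurzweil_has_integral ::
  "(real \<Rightarrow> real) \<Rightarrow> (real \<Rightarrow> real) \<Rightarrow> real \<Rightarrow> real \<Rightarrow> real \<Rightarrow> bool" where
  "kurzweil_has_integral f g a b J \<longleftrightarrow>
     (\<forall>\<epsilon>>0. \<exists>\<delta>. (\<forall>s\<in>{a..b}. \<delta> s > 0) \<and>
        (\<forall>m t \<tau>. kurzweil_fine \<delta> a b m t \<tau> \<longrightarrow>
           \<bar>J - (\<Sum>j=1..m. f (\<tau> j) * (g (t j) - g (t (j - 1))))\<bar> < \<epsilon>))"

end

theory Submission
  imports Defs
begin

(*
  The solution is explicit: y(t) = exp(g(t) - g(0) + H(t)), where H(t) sums
  phi(g(s) - g(s-)) over the jump points s in (0,t] and phi(x) = -ln(1 - x) - x.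
  Between jumps y behaves like exp g; at a jump of size D the tag convention of the
  Kurzweil integral forces y(s) - y(s-) = y(s) D, i.e. y(s) = y(s-)/(1 - D), which is
  exactly the factor exp(D + phi(D)). For 0 <= D <= 1/2 we have 0 <= phi(D) <= min(D, 2 D^2);
  this gives H(t) <= g(t) - g(0), hence the exponential bound, and Riemann-Stieltjes
  errors of order (increment of g)^2 on the intervals of a fine partition.

  Uniqueness: the difference w of two bounded solutions satisfies w(t) = int_0^t w dg.
  At the infimum c of the points where w does not vanish, g(c) - g(r) <= 3/4 for some
  r < c (jumps are at most 1/2) gives |w(c)| <= 3/4 |w(c)|, and right continuity of g
  makes the supremum of |w| on a short interval [c, t1] at most half of itself.
*)

section \<open>Fine tagged partitions\<close>

lemma kurzweil_fine_points_mono: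
  assumes "kurzweil_fine \<delta> a b m t \<tau>" "i \<le> j" "j \<le> m"
  shows "t i \<le> t j"
  using assms(2,3)
proof (induction j)
  case 0
  then show ?case by simp
next
  case (Suc j)
  show ?case
  proof (cases "i = Suc j")
    case False
    then have "t i \<le> t j" using Suc by simp
    moreover have "t j < t (Suc j)"
      using assms(1) Suc.prems(2) unfolding kurzweil_fine_def by force
    ultimately show ?thesis by simp
  qed simp
qed

lemma kurzweil_fine_points_bounds:
  assumes "kurzweil_fine \<delta> a b m t \<tau>" "j \<le> m"
  shows "a \<le> t j" "t j \<le> b"
  using kurzweil_fine_points_mono[OF assms(1), of 0 j] kurzweil_fine_points_mono[OF assms(1), of j m]
    assms unfolding kurzweil_fine_def by auto

lemma kurzweil_fine_tagD:
  assumes "kurzweil_fine \<delta> a b m t \<tau>" "j \<in> {1..m}"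
  shows "t (j - 1) < t j" "t (j - 1) \<le> \<tau> j" "\<tau> j \<le> t j" "a \<le> \<tau> j" "\<tau> j \<le> b"
    "\<tau> j - \<delta> (\<tau> j) < t (j - 1)" "t j < \<tau> j + \<delta> (\<tau> j)"
proof -
  show tag: "t (j - 1) < t j" "t (j - 1) \<le> \<tau> j" "\<tau> j \<le> t j"
    "\<tau> j - \<delta> (\<tau> j) < t (j - 1)" "t j < \<tau> j + \<delta> (\<tau> j)"
    using assms unfolding kurzweil_fine_def by auto
  have "j - 1 \<le> m" "j \<le> m" using assms(2) by auto
  then show "a \<le> \<tau> j" "\<tau> j \<le> b"
    using kurzweil_fine_points_bounds[OF assms(1)] tag(2,3) by (meson order_trans)+
qed

lemma kurzweil_fine_gauge_mono:
  assumes "kurzweil_fine \<delta>' a b m t \<tau>" "\<forall>x\<in>{a..b}. \<delta>' x \<le> \<delta> x"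
  shows "kurzweil_fine \<delta> a b m t \<tau>"
proof -
  have "\<tau> j - \<delta> (\<tau> j) < t (j - 1) \<and> t j < \<tau> j + \<delta> (\<tau> j)" if "j \<in> {1..m}" for j
    using kurzweil_fine_tagD[OF assms(1) that] assms(2) by force
  then show ?thesis using assms(1) unfolding kurzweil_fine_def by blast
qed

lemma kurzweil_fine_trivial: "kurzweil_fine \<delta> a a 0 (\<lambda>_. a) \<tau>"
  unfolding kurzweil_fine_def by auto

lemma kurzweil_fine_length_pos:
  assumes "kurzweil_fine \<delta> a b m t \<tau>" "a < b"
  shows "1 \<le> m"
  using assms unfolding kurzweil_fine_def by (cases m) auto

lemma kurzweil_fine_single:
  assumes "a < b" "b < a + \<delta> a"
  shows "kurzweil_fine \<delta> a b 1 (\<lambda>j. if j = 0 then a else b) (\<lambda>_. a)"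
  using assms unfolding kurzweil_fine_def by auto

lemma kurzweil_fine_stretch:
  assumes "kurzweil_fine \<delta> a x m t \<tau>" "1 \<le> m" "x < y" "y < \<tau> m + \<delta> (\<tau> m)"
  shows "kurzweil_fine \<delta> a y m (t(m := y)) \<tau>"
proof -
  note fine = assms(1)[unfolded kurzweil_fine_def]
  have last: "t (m - 1) < x" "t (m - 1) \<le> \<tau> m" "\<tau> m \<le> x" "\<tau> m - \<delta> (\<tau> m) < t (m - 1)"
    using kurzweil_fine_tagD[OF assms(1), of m] assms(2) fine by auto
  show ?thesis
    using fine last assms(2-4) unfolding kurzweil_fine_def by (intro conjI ballI) auto
qed

lemma kurzweil_fine_snoc:
  assumes "kurzweil_fine \<delta> a x m t \<tau>" "\<tau> m < x" "x < \<zeta>" "\<zeta> \<le> y"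
    "\<zeta> - \<delta> \<zeta> < x" "y < \<zeta> + \<delta> \<zeta>"
  shows "kurzweil_fine \<delta> a y (Suc m) (t(Suc m := y)) (\<tau>(Suc m := \<zeta>))"
proof -
  have "\<tau> j < t j" if "j \<in> {1..m}" for j
    using that assms(1,2) unfolding kurzweil_fine_def by (cases "j = m") auto
  then show ?thesis
    using assms unfolding kurzweil_fine_def by (intro conjI ballI) (auto simp: le_Suc_eq)
qed

lemma real_interval_induct:
  fixes P :: "real \<Rightarrow> bool"
  assumes "a < b"
    and start: "\<exists>e>0. \<forall>y. a < y \<and> y < a + e \<longrightarrow> P y"
    and step: "\<And>y. a < y \<Longrightarrow> y < b \<Longrightarrow> P y \<Longrightarrow> \<exists>e>0. \<forall>z. y < z \<and> z < y + e \<longrightarrow> P z"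
    and limit: "\<And>c. a < c \<Longrightarrow> c \<le> b \<Longrightarrow> \<forall>y\<in>{a<..<c}. P y \<Longrightarrow> P c"
  shows "P b"
proof -
  define S where "S = {x\<in>{a..b}. \<forall>y\<in>{a<..x}. P y}"
  define c where "c = Sup S"
  have "a \<in> S" using \<open>a < b\<close> unfolding S_def by simp
  have "bdd_above S" unfolding S_def by (rule bdd_aboveI[of _ b]) auto
  then have le_c: "x \<le> c" if "x \<in> S" for x unfolding c_def using that by (intro cSup_upper)
  have "c \<le> b" unfolding c_def using \<open>a \<in> S\<close> by (intro cSup_least) (auto simp: S_def)
  have below: "P y" if "a < y" "y < c" for y
  proof -
    obtain x where "x \<in> S" "y < x"
      using less_cSupD[of S y] \<open>a \<in> S\<close> \<open>y < c\<close> unfolding c_def by blast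
    then show ?thesis using that unfolding S_def by auto
  qed
  have "a < c"
  proof -
    obtain e where "e > 0" "\<forall>y. a < y \<and> y < a + e \<longrightarrow> P y" using start by blast
    then have "min b (a + e / 2) \<in> S" using \<open>a < b\<close> unfolding S_def by auto
    then show ?thesis using le_c \<open>a < b\<close> \<open>e > 0\<close> by fastforce
  qed
  then have "P c" using limit \<open>c \<le> b\<close> below by auto
  have "c = b"
  proof (rule ccontr)
    assume "c \<noteq> b"
    then have "c < b" using \<open>c \<le> b\<close> by simp
    then obtain e where e: "e > 0" "\<forall>z. c < z \<and> z < c + e \<longrightarrow> P z"
      using step \<open>a < c\<close> \<open>P c\<close> by blast
    have "P y" if "a < y" "y \<le> min b (c + e / 2)" for y
      using below[of y] \<open>P c\<close> e that by (cases y c rule: linorder_cases) auto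
    then have "min b (c + e / 2) \<in> S" using \<open>a < c\<close> \<open>c < b\<close> \<open>e > 0\<close> unfolding S_def by auto
    then show False using le_c \<open>c < b\<close> \<open>e > 0\<close> by fastforce
  qed
  with \<open>P c\<close> show ?thesis by simp
qed

lemma kurzweil_fine_right_nbhd:
  assumes "kurzweil_fine \<delta> a y m t \<tau>" "a < y"
  shows "\<exists>e>0. \<forall>z. y < z \<and> z < y + e \<longrightarrow> (\<exists>m t \<tau>. kurzweil_fine \<delta> a z m t \<tau>)"
proof -
  have m: "1 \<le> m" using kurzweil_fine_length_pos[OF assms] .
  then have "y < \<tau> m + \<delta> (\<tau> m)"
    using assms(1) kurzweil_fine_tagD(7)[OF assms(1), of m] unfolding kurzweil_fine_def by auto
  then show ?thesis
    using kurzweil_fine_stretch[OF assms(1) m] by (intro exI[of _ "\<tau> m + \<delta> (\<tau> m) - y"]) auto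
qed

lemma kurzweil_fine_left_limit:
  assumes "a < c" "0 < \<delta> c" and below: "\<forall>y\<in>{a<..<c}. \<exists>m t \<tau>. kurzweil_fine \<delta> a y m t \<tau>"
  shows "\<exists>m t \<tau>. kurzweil_fine \<delta> a c m t \<tau>"
proof -
  define x where "x = (max a (c - \<delta> c) + c) / 2"
  have x: "a < x" "x < c" "c - \<delta> c < x" unfolding x_def using assms(1,2) by auto
  then have "\<exists>m t \<tau>. kurzweil_fine \<delta> a x m t \<tau>" using below by simp
  then obtain m t \<tau> where fine: "kurzweil_fine \<delta> a x m t \<tau>" by blast
  have m: "1 \<le> m" using kurzweil_fine_length_pos[OF fine \<open>a < x\<close>] .
  then have last: "\<tau> m \<le> x" "x < \<tau> m + \<delta> (\<tau> m)"
    using fine kurzweil_fine_tagD(3,7)[OF fine, of m] unfolding kurzweil_fine_def by auto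
  define x' where "x' = (x + min c (\<tau> m + \<delta> (\<tau> m))) / 2"
  have x': "x < x'" "x' < c" "x' < \<tau> m + \<delta> (\<tau> m)" unfolding x'_def using x last by auto
  \<comment> \<open>Stretching first makes the last tag an interior point,
    so that the interval [x', c] tagged at c can be appended.\<close>
  have "kurzweil_fine \<delta> a x' m (t(m := x')) \<tau>" using kurzweil_fine_stretch[OF fine m x'(1,3)] .
  then have "kurzweil_fine \<delta> a c (Suc m) ((t(m := x'))(Suc m := c)) (\<tau>(Suc m := c))"
    by (rule kurzweil_fine_snoc) (use x x' last assms(2) in auto)
  then show ?thesis by blast
qed

lemma kurzweil_fine_exists:
  assumes "a < b" "\<forall>x\<in>{a..b}. 0 < \<delta> x"
  shows "\<exists>m t \<tau>. kurzweil_fine \<delta> a b m t \<tau>"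
proof (rule real_interval_induct[OF \<open>a < b\<close>])
  have "0 < \<delta> a" using assms by simp
  moreover have "\<forall>y. a < y \<and> y < a + \<delta> a \<longrightarrow> (\<exists>m t \<tau>. kurzweil_fine \<delta> a y m t \<tau>)"
    using kurzweil_fine_single by blast
  ultimately show "\<exists>e>0. \<forall>y. a < y \<and> y < a + e \<longrightarrow> (\<exists>m t \<tau>. kurzweil_fine \<delta> a y m t \<tau>)"
    by blast
  show "\<exists>e>0. \<forall>z. y < z \<and> z < y + e \<longrightarrow> (\<exists>m t \<tau>. kurzweil_fine \<delta> a z m t \<tau>)"
    if "a < y" "\<exists>m t \<tau>. kurzweil_fine \<delta> a y m t \<tau>" for y
    using kurzweil_fine_right_nbhd that by blast
  show "\<exists>m t \<tau>. kurzweil_fine \<delta> a c m t \<tau>"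
    if "a < c" "c \<le> b" "\<forall>y\<in>{a<..<c}. \<exists>m t \<tau>. kurzweil_fine \<delta> a y m t \<tau>" for c
  proof -
    have "0 < \<delta> c" using assms(2) that(1,2) by simp
    then show ?thesis using kurzweil_fine_left_limit that(1,3) by blast
  qed
qed

section \<open>Elementary estimates for the integral\<close>

lemma kurzweil_has_integral_diff:
  assumes "kurzweil_has_integral f g a b A" "kurzweil_has_integral h g a b B"
  shows "kurzweil_has_integral (\<lambda>x. f x - h x) g a b (A - B)"
  unfolding kurzweil_has_integral_def
proof (intro allI impI)
  fix \<epsilon> :: real assume "\<epsilon> > 0"
  then have "\<epsilon> / 2 > 0" by simp
  then obtain \<delta>1 where \<delta>1: "\<forall>s\<in>{a..b}. \<delta>1 s > 0"
      "\<forall>m t \<tau>. kurzweil_fine \<delta>1 a b m t \<tau> \<longrightarrow>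
         \<bar>A - (\<Sum>j=1..m. f (\<tau> j) * (g (t j) - g (t (j - 1))))\<bar> < \<epsilon> / 2"
    using assms(1) unfolding kurzweil_has_integral_def by blast
  obtain \<delta>2 where \<delta>2: "\<forall>s\<in>{a..b}. \<delta>2 s > 0"
      "\<forall>m t \<tau>. kurzweil_fine \<delta>2 a b m t \<tau> \<longrightarrow>
         \<bar>B - (\<Sum>j=1..m. h (\<tau> j) * (g (t j) - g (t (j - 1))))\<bar> < \<epsilon> / 2"
    using assms(2) \<open>\<epsilon> / 2 > 0\<close> unfolding kurzweil_has_integral_def by blast
  show "\<exists>\<delta>. (\<forall>s\<in>{a..b}. 0 < \<delta> s) \<and>
          (\<forall>m t \<tau>. kurzweil_fine \<delta> a b m t \<tau> \<longrightarrow>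
             \<bar>A - B - (\<Sum>j = 1..m. (f (\<tau> j) - h (\<tau> j)) * (g (t j) - g (t (j - 1))))\<bar> < \<epsilon>)"
  proof (intro exI[of _ "\<lambda>s. min (\<delta>1 s) (\<delta>2 s)"] conjI allI impI)
    show "\<forall>s\<in>{a..b}. 0 < min (\<delta>1 s) (\<delta>2 s)" using \<delta>1(1) \<delta>2(1) by simp
    fix m t \<tau> assume fine: "kurzweil_fine (\<lambda>s. min (\<delta>1 s) (\<delta>2 s)) a b m t \<tau>"
    have "kurzweil_fine \<delta>1 a b m t \<tau>" "kurzweil_fine \<delta>2 a b m t \<tau>"
      by (rule kurzweil_fine_gauge_mono[OF fine], simp)+
    then have "\<bar>A - (\<Sum>j=1..m. f (\<tau> j) * (g (t j) - g (t (j - 1))))\<bar> < \<epsilon> / 2"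
      "\<bar>B - (\<Sum>j=1..m. h (\<tau> j) * (g (t j) - g (t (j - 1))))\<bar> < \<epsilon> / 2"
      using \<delta>1(2) \<delta>2(2) by blast+
    moreover have "(\<Sum>j = 1..m. (f (\<tau> j) - h (\<tau> j)) * (g (t j) - g (t (j - 1)))) =
        (\<Sum>j=1..m. f (\<tau> j) * (g (t j) - g (t (j - 1)))) - (\<Sum>j=1..m. h (\<tau> j) * (g (t j) - g (t (j - 1))))"
      by (simp add: left_diff_distrib sum_subtractf)
    ultimately show "\<bar>A - B - (\<Sum>j = 1..m. (f (\<tau> j) - h (\<tau> j)) * (g (t j) - g (t (j - 1))))\<bar> < \<epsilon>"
      by linarith
  qed
qed

lemma kurzweil_has_integral_degenerate:
  assumes "kurzweil_has_integral f g a a J"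
  shows "J = 0"
proof (rule ccontr)
  assume "J \<noteq> 0"
  then have "\<bar>J\<bar> > 0" by simp
  then obtain \<delta> where "\<forall>m t \<tau>. kurzweil_fine \<delta> a a m t \<tau> \<longrightarrow>
      \<bar>J - (\<Sum>j=1..m. f (\<tau> j) * (g (t j) - g (t (j - 1))))\<bar> < \<bar>J\<bar>"
    using assms unfolding kurzweil_has_integral_def by blast
  from this[rule_format, OF kurzweil_fine_trivial] show False by simp
qed

lemma riemann_stieltjes_sum_abs_le:
  fixes g w :: "real \<Rightarrow> real"
  assumes fine: "kurzweil_fine \<delta> a b m t \<tau>" and mono: "mono_on {a..b} g"
    and "a \<le> r" "r \<le> b" "0 \<le> M"
    and tags: "\<And>j. j \<in> {1..m} \<Longrightarrow> w (\<tau> j) \<noteq> 0 \<Longrightarrow> r \<le> t (j - 1) \<and> \<bar>w (\<tau> j)\<bar> \<le> M"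
  shows "\<bar>\<Sum>j=1..m. w (\<tau> j) * (g (t j) - g (t (j - 1)))\<bar> \<le> M * (g b - g r)"
proof -
  let ?G = "\<lambda>j. g (max (t j) r)"
  have summand: "\<bar>w (\<tau> j) * (g (t j) - g (t (j - 1)))\<bar> \<le> M * (?G j - ?G (j - 1))"
    if j: "j \<in> {1..m}" for j
  proof -
    have "j - 1 \<le> m" "j \<le> m" using j by auto
    then have pts: "a \<le> t (j - 1)" "t (j - 1) < t j" "t j \<le> b"
      using kurzweil_fine_points_bounds[OF fine] kurzweil_fine_tagD(1)[OF fine j] by auto
    have "?G (j - 1) \<le> ?G j"
      by (rule mono_onD[OF mono]) (use pts \<open>a \<le> r\<close> \<open>r \<le> b\<close> in auto)
    show ?thesis
    proof (cases "w (\<tau> j) = 0")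
      case True
      have "0 \<le> M * (?G j - ?G (j - 1))"
        by (rule mult_nonneg_nonneg) (use \<open>?G (j - 1) \<le> ?G j\<close> \<open>0 \<le> M\<close> in simp_all)
      with True show ?thesis by simp
    next
      case False
      with tags j have "r \<le> t (j - 1)" "\<bar>w (\<tau> j)\<bar> \<le> M" by auto
      moreover have "g (t (j - 1)) \<le> g (t j)"
        by (rule mono_onD[OF mono]) (use pts in auto)
      moreover have "?G j = g (t j)" "?G (j - 1) = g (t (j - 1))"
        using \<open>r \<le> t (j - 1)\<close> pts by (simp_all add: max_def)
      ultimately show ?thesis by (simp add: abs_mult mult_right_mono)
    qed
  qed
  have "\<bar>\<Sum>j=1..m. w (\<tau> j) * (g (t j) - g (t (j - 1)))\<bar> \<le> (\<Sum>j=1..m. M * (?G j - ?G (j - 1)))"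
    using summand by (rule order_trans[OF sum_abs sum_mono])
  also have "\<dots> = M * (?G m - ?G 0)"
    using sum_telescope''[of 0 m ?G] by (simp add: sum_distrib_left[symmetric])
  also have "\<dots> = M * (g b - g r)"
    using fine \<open>a \<le> r\<close> \<open>r \<le> b\<close> unfolding kurzweil_fine_def by simp
  finally show ?thesis .
qed

lemma kurzweil_has_integral_abs_le:
  assumes int: "kurzweil_has_integral w g a b J" and mono: "mono_on {a..b} g"
    and "a \<le> r" "r \<le> c" "c \<le> b"
    and vanish: "\<forall>x\<in>{a..<c}. w x = 0" and bound: "\<forall>x\<in>{c..b}. \<bar>w x\<bar> \<le> M"
    and at_c: "r < c \<or> r = a \<or> w c = 0"
  shows "\<bar>J\<bar> \<le> M * (g b - g r)"
proof (cases "a = b")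
  case True
  then have "J = 0" "r = b"
    using kurzweil_has_integral_degenerate int \<open>a \<le> r\<close> \<open>r \<le> c\<close> \<open>c \<le> b\<close> by auto
  then show ?thesis by simp
next
  case False
  then have "a < b" using assms by simp
  have "\<bar>w c\<bar> \<le> M" using bound \<open>c \<le> b\<close> by simp
  then have "0 \<le> M" by linarith
  show ?thesis
  proof (rule field_le_epsilon)
    fix e :: real assume "0 < e"
    then obtain \<delta> where \<delta>: "\<forall>s\<in>{a..b}. 0 < \<delta> s"
      "\<forall>m t \<tau>. kurzweil_fine \<delta> a b m t \<tau> \<longrightarrow>
         \<bar>J - (\<Sum>j=1..m. w (\<tau> j) * (g (t j) - g (t (j - 1))))\<bar> < e"
      using int unfolding kurzweil_has_integral_def by blast
    \<comment> \<open>The smaller gauge keeps intervals tagged right of r from reaching below r.\<close>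
    define \<delta>' where "\<delta>' x = (if r < x then min (\<delta> x) (x - r) else \<delta> x)" for x
    have "\<forall>x\<in>{a..b}. 0 < \<delta>' x" using \<delta>(1) unfolding \<delta>'_def by simp
    then obtain m t \<tau> where fine': "kurzweil_fine \<delta>' a b m t \<tau>"
      using kurzweil_fine_exists[OF \<open>a < b\<close>] by blast
    have fine: "kurzweil_fine \<delta> a b m t \<tau>"
      by (rule kurzweil_fine_gauge_mono[OF fine']) (simp add: \<delta>'_def)
    have tags: "r \<le> t (j - 1) \<and> \<bar>w (\<tau> j)\<bar> \<le> M" if j: "j \<in> {1..m}" "w (\<tau> j) \<noteq> 0" for j
    proof -
      note tag = kurzweil_fine_tagD[OF fine' j(1)]
      have "c \<le> \<tau> j"
      proof (rule ccontr)
        assume "\<not> c \<le> \<tau> j"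
        then have "\<tau> j \<in> {a..<c}" using tag(4) by simp
        then show False using vanish j(2) by simp
      qed
      moreover have "r \<le> t (j - 1)"
      proof (cases "r < \<tau> j")
        case True
        then have "\<delta>' (\<tau> j) \<le> \<tau> j - r" by (simp add: \<delta>'_def)
        then show ?thesis using tag(6) by linarith
      next
        case False
        then have "\<tau> j = c" "r = c" using \<open>c \<le> \<tau> j\<close> \<open>r \<le> c\<close> by auto
        then have "r = a" using at_c j(2) by auto
        then show ?thesis using kurzweil_fine_points_bounds(1)[OF fine', of "j - 1"] j(1) by auto
      qed
      ultimately show ?thesis using bound tag(5) by simp
    qed
    have "r \<le> b" using \<open>r \<le> c\<close> \<open>c \<le> b\<close> by simp
    have "\<bar>\<Sum>j=1..m. w (\<tau> j) * (g (t j) - g (t (j - 1)))\<bar> \<le> M * (g b - g r)"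
      using riemann_stieltjes_sum_abs_le[OF fine mono \<open>a \<le> r\<close> \<open>r \<le> b\<close> \<open>0 \<le> M\<close> tags] .
    moreover have "\<bar>J - (\<Sum>j=1..m. w (\<tau> j) * (g (t j) - g (t (j - 1))))\<bar> < e"
      using \<delta>(2) fine by blast
    ultimately show "\<bar>J\<bar> \<le> M * (g b - g r) + e" by linarith
  qed
qed

section \<open>Left limits and jumps of monotone functions\<close>

lemma mono_on_tendsto_at_left:
  fixes g :: "real \<Rightarrow> real"
  assumes mono: "mono_on {a..b} g" and "a < s" "s \<le> b"
  shows "(g \<longlongrightarrow> Sup (g ` {a..<s})) (at_left s)"
proof -
  have "(g \<longlongrightarrow> Sup (g ` ({..<s} \<inter> {a..s}))) (at s within ({..<s} \<inter> {a..s}))"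
    by (rule Lim_left_bound[where K = "g s"]) (use assms in \<open>auto intro: mono_onD\<close>)
  moreover have "{..<s} \<inter> {a..s} = {a..<s}" by auto
  moreover have "at s within {a..<s} = at_left s"
    by (rule at_within_nhd[of _ "{a<..}"]) (use \<open>a < s\<close> in auto)
  ultimately show ?thesis by simp
qed

lemma mono_on_Lim_at_left:
  fixes g :: "real \<Rightarrow> real"
  assumes "mono_on {a..b} g" "a < s" "s \<le> b"
  shows "Lim (at_left s) g = Sup (g ` {a..<s})"
  using tendsto_Lim[OF trivial_limit_at_left_real mono_on_tendsto_at_left[OF assms]] .

lemma mono_on_le_Lim_at_left:
  fixes g :: "real \<Rightarrow> real"
  assumes mono: "mono_on {a..b} g" and "a \<le> u" "u < s" "s \<le> b"
  shows "g u \<le> Lim (at_left s) g"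
proof -
  have "bdd_above (g ` {a..<s})"
    using assms by (intro bdd_aboveI[of _ "g s"]) (auto intro: mono_onD[OF mono])
  then show ?thesis
    using assms mono_on_Lim_at_left[OF mono, of s] by (auto intro: cSup_upper)
qed

lemma mono_on_Lim_at_left_le:
  fixes g :: "real \<Rightarrow> real"
  assumes mono: "mono_on {a..b} g" and "a < s" "s \<le> b"
  shows "Lim (at_left s) g \<le> g s"
  using assms mono_on_Lim_at_left[OF assms]
  by (auto intro!: cSup_least intro: mono_onD[OF mono])

lemma mono_on_Lim_at_left_approx:
  fixes g :: "real \<Rightarrow> real"
  assumes "mono_on {a..b} g" "a < s" "s \<le> b" "0 < e"
  shows "\<exists>u\<in>{a..<s}. Lim (at_left s) g - e < g u"
proof -
  have "g ` {a..<s} \<noteq> {}" using assms by simp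
  from less_cSupD[OF this, of "Lim (at_left s) g - e"] show ?thesis
    using assms mono_on_Lim_at_left[OF assms(1-3)] by auto
qed

definition left_jump :: "(real \<Rightarrow> real) \<Rightarrow> real \<Rightarrow> real" where
  "left_jump g s = g s - Lim (at_left s) g"

lemma left_jump_nonneg:
  assumes "mono_on {a..b} g" "a < s" "s \<le> b"
  shows "0 \<le> left_jump g s"
  using mono_on_Lim_at_left_le[OF assms] unfolding left_jump_def by simp

lemma sum_left_jump_le_Lim:
  assumes "mono_on {a..b} g" "a < b" "finite F" "F \<subseteq> {a<..<b}"
  shows "sum (left_jump g) F \<le> Lim (at_left b) g - g a"
  using assms(3,1,2,4)
proof (induction F arbitrary: b rule: finite_linorder_max_induct)
  case empty
  then show ?case using mono_on_le_Lim_at_left[of a b g a b] by simp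
next
  case (insert s F)
  have s: "a < s" "s < b" using insert.prems(3) by auto
  have "mono_on {a..s} g" by (rule mono_on_subset[OF insert.prems(1)]) (use s in auto)
  moreover have "F \<subseteq> {a<..<s}" using insert.hyps(2) insert.prems(3) by auto
  ultimately have "sum (left_jump g) F \<le> Lim (at_left s) g - g a" using insert.IH s(1) by blast
  moreover have "sum (left_jump g) (insert s F) = left_jump g s + sum (left_jump g) F"
    using insert.hyps by auto
  moreover have "g s \<le> Lim (at_left b) g" using mono_on_le_Lim_at_left[OF insert.prems(1)] s by simp
  ultimately show ?case unfolding left_jump_def by simp
qed

lemma sum_left_jump_le:
  assumes mono: "mono_on {a..b} g" and "a \<le> b" "finite F" "F \<subseteq> {a<..b}"
  shows "sum (left_jump g) F \<le> g b - g a"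
proof (cases "a = b")
  case True
  then show ?thesis using assms(4) by simp
next
  case False
  then have "a < b" using \<open>a \<le> b\<close> by simp
  have rest: "sum (left_jump g) (F - {b}) \<le> Lim (at_left b) g - g a"
    using assms(3,4) by (intro sum_left_jump_le_Lim[OF mono \<open>a < b\<close>]) auto
  show ?thesis
  proof (cases "b \<in> F")
    case True
    then have "sum (left_jump g) F = left_jump g b + sum (left_jump g) (F - {b})"
      using assms(3) by (simp add: sum.remove)
    then show ?thesis using rest unfolding left_jump_def by simp
  next
    case False
    then show ?thesis using rest mono_on_Lim_at_left_le[OF mono \<open>a < b\<close>] by simp
  qed
qed

\<comment> \<open>Chosen so that exp (x + jump_correction x) = 1 / (1 - x).\<close>
definition jump_correction :: "real \<Rightarrow> real" where
  "jump_correction x = - ln (1 - x) - x"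

lemma jump_correction_bounds:
  assumes "0 \<le> x" "x \<le> 1/2"
  shows "0 \<le> jump_correction x" "jump_correction x \<le> 2 * x\<^sup>2" "jump_correction x \<le> x"
proof -
  have "ln (1 - x) \<le> (1 - x) - 1" using assms by (intro ln_le_minus_one) simp
  then show "0 \<le> jump_correction x" unfolding jump_correction_def by simp
  have "- x - 2 * x\<^sup>2 \<le> ln (1 - x)" using ln_one_minus_pos_lower_bound[OF assms] .
  then show "jump_correction x \<le> 2 * x\<^sup>2" unfolding jump_correction_def by simp
  moreover have "2 * x\<^sup>2 \<le> x"
    using mult_left_mono[of "2 * x" 1 x] assms by (simp add: power2_eq_square)
  ultimately show "jump_correction x \<le> x" by simp
qed

lemma exp_add_sub_one_le:
  fixes D h :: real
  assumes "0 \<le> D" "D \<le> 1/3" "0 \<le> h" "h \<le> 2 * D\<^sup>2"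
  shows "0 \<le> exp (D + h) - 1 - D" "exp (D + h) - 1 - D \<le> 5 * D\<^sup>2"
proof -
  have "D * D \<le> D * (1/3)" using assms by (intro mult_left_mono) simp_all
  then have x: "0 \<le> D + h" "D + h \<le> 5/3 * D" using assms by (simp_all add: power2_eq_square)
  show "0 \<le> exp (D + h) - 1 - D" using exp_ge_add_one_self[of "D + h"] assms by linarith
  have "(D + h)\<^sup>2 \<le> (5/3 * D)\<^sup>2" using x by (intro power_mono) simp_all
  moreover have "exp (D + h) \<le> 1 + (D + h) + (D + h)\<^sup>2" using x assms by (intro exp_bound) simp_all
  ultimately show "exp (D + h) - 1 - D \<le> 5 * D\<^sup>2" using assms by (simp add: power2_eq_square)
qed

lemma one_sub_mult_exp_abs_le:
  fixes \<Delta> d k :: real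
  assumes "0 \<le> \<Delta>" "\<Delta> \<le> 1/2" "0 \<le> d" "d \<le> 1/3" "0 \<le> k" "k \<le> 2 * d\<^sup>2"
  shows "\<bar>1 - \<Delta> - d - (1 - \<Delta>) * exp (- (d + k))\<bar> \<le> 5 * d * (d + \<Delta>)"
proof -
  define x where "x = d + k"
  define q where "q = 1 - exp (- x)"
  have "d * d \<le> d * (1/3)" using assms by (intro mult_left_mono) simp_all
  then have x: "0 \<le> x" "x \<le> 5/3 * d" using assms unfolding x_def by (simp_all add: power2_eq_square)
  have q: "0 \<le> q" "q \<le> x" unfolding q_def using x exp_ge_add_one_self[of "- x"] by simp_all
  have "exp (- x) = 1 / exp x" by (simp add: exp_minus inverse_eq_divide)
  also have "\<dots> \<le> 1 / (1 + x)"
    using exp_ge_add_one_self[of x] x by (intro divide_left_mono) simp_all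
  also have "\<dots> \<le> 1 - x + x\<^sup>2"
    using x by (simp add: field_simps power2_eq_square mult_nonneg_nonneg)
  finally have "x - x\<^sup>2 \<le> q" unfolding q_def by simp
  moreover have "x\<^sup>2 \<le> 25/9 * d\<^sup>2"
    using power_mono[of x "5/3 * d" 2] x by (simp add: power2_eq_square)
  moreover have "\<Delta> * q \<le> \<Delta> * (5/3 * d)" using q x assms by (intro mult_left_mono) simp_all
  moreover have "0 \<le> \<Delta> * q" using assms q by simp
  moreover have "1 - \<Delta> - d - (1 - \<Delta>) * exp (- (d + k)) = (q - d) - \<Delta> * q"
    unfolding q_def x_def by (simp add: algebra_simps)
  moreover have "0 \<le> \<Delta> * d" using assms by simp
  moreover have "\<Delta> * (5/3 * d) = 5/3 * (\<Delta> * d)" "5 * d * (d + \<Delta>) = 5 * d\<^sup>2 + 5 * (\<Delta> * d)"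
    by (simp_all add: algebra_simps power2_eq_square)
  ultimately show ?thesis
    using q assms unfolding x_def abs_le_iff by linarith
qed

section \<open>The explicit solution\<close>

locale small_jump_integrator =
  fixes g :: "real \<Rightarrow> real" and T :: real
  assumes T_pos: "0 < T"
    and mono: "mono_on {0..T} g"
    and right_cont: "\<forall>t\<in>{0..<T}. continuous (at_right t) g"
    and small_jumps: "\<forall>t\<in>{0<..T}. left_jump g t \<le> 1/2"
begin

lemma g_mono: "0 \<le> u \<Longrightarrow> u \<le> v \<Longrightarrow> v \<le> T \<Longrightarrow> g u \<le> g v"
  by (rule mono_onD[OF mono]) simp_all

lemma mono_on_subinterval: "0 \<le> u \<Longrightarrow> v \<le> T \<Longrightarrow> mono_on {u..v} g"
  by (rule mono_on_subset[OF mono]) auto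

lemma left_jump_bounds:
  assumes "s \<in> {0<..T}"
  shows "0 \<le> left_jump g s" "left_jump g s \<le> 1/2"
  using left_jump_nonneg[OF mono] small_jumps assms by auto

definition jump_excess :: "real \<Rightarrow> real" where
  "jump_excess s = jump_correction (left_jump g s)"

lemma jump_excess_bounds:
  assumes "s \<in> {0<..T}"
  shows "0 \<le> jump_excess s" "jump_excess s \<le> left_jump g s"
    "jump_excess s \<le> 2 * (left_jump g s)\<^sup>2"
  using jump_correction_bounds left_jump_bounds[OF assms] unfolding jump_excess_def by auto

lemma jump_excess_summable:
  assumes "A \<subseteq> {0<..T}"
  shows "jump_excess summable_on A"
proof -
  have "jump_excess summable_on {0<..T}"
  proof (rule nonneg_bdd_above_summable_on)
    show "0 \<le> jump_excess s" if "s \<in> {0<..T}" for s using jump_excess_bounds(1)[OF that] .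
    show "bdd_above (sum jump_excess ` {F. F \<subseteq> {0<..T} \<and> finite F})"
    proof (rule bdd_aboveI2)
      fix F assume "F \<in> {F. F \<subseteq> {0<..T} \<and> finite F}"
      then have F: "F \<subseteq> {0<..T}" "finite F" by auto
      then have "sum jump_excess F \<le> sum (left_jump g) F"
        using jump_excess_bounds(2) by (intro sum_mono) auto
      also have "\<dots> \<le> g T - g 0" using sum_left_jump_le[OF mono _ F(2,1)] T_pos by simp
      finally show "sum jump_excess F \<le> g T - g 0" .
    qed
  qed
  then show ?thesis using assms summable_on_subset_banach by blast
qed

lemma infsum_jump_excess_le:
  assumes "A \<subseteq> {0<..T}" "\<And>F. finite F \<Longrightarrow> F \<subseteq> A \<Longrightarrow> sum (left_jump g) F \<le> D"
  shows "infsum jump_excess A \<le> D"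
proof (rule infsum_le_finite_sums[OF jump_excess_summable[OF assms(1)]])
  fix F assume F: "finite F" "F \<subseteq> A"
  then have "sum jump_excess F \<le> sum (left_jump g) F"
    using assms(1) jump_excess_bounds(2) by (intro sum_mono) auto
  then show "sum jump_excess F \<le> D" using assms(2)[OF F] by simp
qed

lemma infsum_jump_excess_le_sq:
  assumes "A \<subseteq> {0<..T}" "\<And>F. finite F \<Longrightarrow> F \<subseteq> A \<Longrightarrow> sum (left_jump g) F \<le> D"
  shows "infsum jump_excess A \<le> 2 * D\<^sup>2"
proof (rule infsum_le_finite_sums[OF jump_excess_summable[OF assms(1)]])
  fix F assume F: "finite F" "F \<subseteq> A"
  have jump_le: "left_jump g s \<le> D" if "s \<in> A" for s using assms(2)[of "{s}"] that by simp
  show "sum jump_excess F \<le> 2 * D\<^sup>2"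
  proof (cases "F = {}")
    case True
    then show ?thesis by simp
  next
    case False
    then obtain s0 where "s0 \<in> F" by blast
    then have "0 \<le> D" using jump_le left_jump_bounds(1) F(2) assms(1) by force
    have "sum jump_excess F \<le> (\<Sum>s\<in>F. 2 * D * left_jump g s)"
    proof (rule sum_mono)
      fix s assume "s \<in> F"
      then have s: "s \<in> {0<..T}" "s \<in> A" using F(2) assms(1) by auto
      have "jump_excess s \<le> 2 * left_jump g s * left_jump g s"
        using jump_excess_bounds(3)[OF s(1)] by (simp add: power2_eq_square)
      also have "\<dots> \<le> 2 * D * left_jump g s"
        using jump_le[OF s(2)] left_jump_bounds(1)[OF s(1)] by (intro mult_right_mono) simp_all
      finally show "jump_excess s \<le> 2 * D * left_jump g s" .
    qed
    also have "\<dots> = 2 * D * sum (left_jump g) F" by (simp add: sum_distrib_left)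
    also have "\<dots> \<le> 2 * D * D" using assms(2)[OF F] \<open>0 \<le> D\<close> by (intro mult_left_mono) simp_all
    finally show ?thesis by (simp add: power2_eq_square)
  qed
qed

lemma infsum_jump_excess_nonneg: "A \<subseteq> {0<..T} \<Longrightarrow> 0 \<le> infsum jump_excess A"
  using jump_excess_bounds(1) by (intro infsum_nonneg) auto

lemma infsum_jump_excess_split:
  assumes "0 \<le> u" "u \<le> v" "v \<le> T"
  shows "infsum jump_excess {0<..v} = infsum jump_excess {0<..u} + infsum jump_excess {u<..v}"
proof -
  have "{0<..v} = {0<..u} \<union> {u<..v}" using assms by auto
  moreover have "jump_excess summable_on {0<..u}" "jump_excess summable_on {u<..v}"
    using assms by (auto intro!: jump_excess_summable)
  ultimately show ?thesis using infsum_Un_disjoint[of jump_excess "{0<..u}" "{u<..v}"] by auto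
qed

lemma infsum_jump_excess_insert:
  assumes "0 \<le> u" "u < s" "s \<le> T"
  shows "infsum jump_excess {u<..s} = jump_excess s + infsum jump_excess {u<..<s}"
proof -
  have "{u<..s} = insert s {u<..<s}" using assms by auto
  moreover have "jump_excess summable_on {u<..<s}" using assms by (auto intro!: jump_excess_summable)
  ultimately show ?thesis using infsum_insert[of jump_excess "{u<..<s}" s] by simp
qed

definition stieltjes_exp :: "real \<Rightarrow> real" where
  "stieltjes_exp t = exp (g t - g 0 + infsum jump_excess {0<..t})"

lemma stieltjes_exp_0: "stieltjes_exp 0 = 1"
  unfolding stieltjes_exp_def by simp

lemma stieltjes_exp_pos: "0 < stieltjes_exp t"
  unfolding stieltjes_exp_def by simp

lemma stieltjes_exp_bounds:
  assumes "0 \<le> t" "t \<le> T"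
  shows "1 \<le> stieltjes_exp t" "stieltjes_exp t \<le> exp (2 * (g T - g 0))"
proof -
  have "0 \<le> infsum jump_excess {0<..t}" using assms by (intro infsum_jump_excess_nonneg) auto
  moreover have "infsum jump_excess {0<..t} \<le> g t - g 0"
    using assms sum_left_jump_le[OF mono_on_subinterval] by (intro infsum_jump_excess_le) auto
  moreover have "g 0 \<le> g t" "g t \<le> g T" using assms g_mono by auto
  ultimately show "1 \<le> stieltjes_exp t" "stieltjes_exp t \<le> exp (2 * (g T - g 0))"
    unfolding stieltjes_exp_def by simp_all
qed

lemma stieltjes_exp_mono: "mono_on {0..T} stieltjes_exp"
proof (rule mono_onI)
  fix u v assume uv: "u \<in> {0..T}" "v \<in> {0..T}" "u \<le> v"
  moreover have "{u<..v} \<subseteq> {0<..T}" using uv by auto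
  ultimately have "infsum jump_excess {0<..u} \<le> infsum jump_excess {0<..v}"
    using infsum_jump_excess_split[of u v] infsum_jump_excess_nonneg[of "{u<..v}"] by auto
  then show "stieltjes_exp u \<le> stieltjes_exp v"
    unfolding stieltjes_exp_def using g_mono[of u v] uv by simp
qed

lemma stieltjes_exp_continuous_at_right:
  assumes "t \<in> {0..<T}"
  shows "continuous (at_right t) stieltjes_exp"
proof -
  let ?H = "\<lambda>v. infsum jump_excess {0<..v}"
  have g_lim: "(g \<longlongrightarrow> g t) (at_right t)" using right_cont assms by (simp add: continuous_within)
  have near: "\<forall>\<^sub>F v in at_right t. v \<in> {t<..<T}" using assms by (intro eventually_at_right_real) simp
  \<comment> \<open>Squeeze: the jumps in (t, v] add at most 2 (g v - g t)^2.\<close>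
  have bounds: "\<forall>\<^sub>F v in at_right t. ?H t \<le> ?H v \<and> ?H v \<le> ?H t + 2 * (g v - g t)\<^sup>2"
    using near
  proof eventually_elim
    case (elim v)
    then have "{t<..v} \<subseteq> {0<..T}" using assms by auto
    moreover have "sum (left_jump g) F \<le> g v - g t" if "finite F" "F \<subseteq> {t<..v}" for F
      using sum_left_jump_le[OF mono_on_subinterval[of t v] _ that] assms elim by auto
    ultimately have "0 \<le> infsum jump_excess {t<..v}" "infsum jump_excess {t<..v} \<le> 2 * (g v - g t)\<^sup>2"
      by (auto intro: infsum_jump_excess_nonneg infsum_jump_excess_le_sq)
    then show ?case using infsum_jump_excess_split[of t v] assms elim by simp
  qed
  have "((\<lambda>v. ?H t + 2 * (g v - g t)\<^sup>2) \<longlongrightarrow> ?H t + 2 * (g t - g t)\<^sup>2) (at_right t)"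
    by (intro tendsto_intros g_lim)
  then have upper_lim: "((\<lambda>v. ?H t + 2 * (g v - g t)\<^sup>2) \<longlongrightarrow> ?H t) (at_right t)" by simp
  have "(?H \<longlongrightarrow> ?H t) (at_right t)"
  proof (rule tendsto_sandwich[where f = "\<lambda>_. ?H t" and h = "\<lambda>v. ?H t + 2 * (g v - g t)\<^sup>2"])
    show "\<forall>\<^sub>F v in at_right t. ?H t \<le> ?H v" using bounds by (rule eventually_mono) simp
    show "\<forall>\<^sub>F v in at_right t. ?H v \<le> ?H t + 2 * (g v - g t)\<^sup>2" using bounds by (rule eventually_mono) simp
  qed (use upper_lim in simp_all)
  then have "((\<lambda>v. exp (g v - g 0 + ?H v)) \<longlongrightarrow> exp (g t - g 0 + ?H t)) (at_right t)"
    by (intro tendsto_intros g_lim)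
  then have "(stieltjes_exp \<longlongrightarrow> stieltjes_exp t) (at_right t)"
    unfolding stieltjes_exp_def[abs_def] .
  then show ?thesis by (simp add: continuous_within)
qed

lemma stieltjes_exp_increment_right:
  assumes "0 \<le> s" "s \<le> v" "v \<le> T" "g v - g s \<le> 1/3"
  shows "\<bar>stieltjes_exp v - stieltjes_exp s - stieltjes_exp s * (g v - g s)\<bar>
    \<le> 5 * stieltjes_exp s * (g v - g s)\<^sup>2"
proof -
  define D h where "D = g v - g s" and "h = infsum jump_excess {s<..v}"
  have D: "0 \<le> D" "D \<le> 1/3" using g_mono assms unfolding D_def by auto
  have "sum (left_jump g) F \<le> D" if "finite F" "F \<subseteq> {s<..v}" for F
    using sum_left_jump_le[OF mono_on_subinterval[of s v] _ that] assms unfolding D_def by auto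
  moreover have "{s<..v} \<subseteq> {0<..T}" using assms by auto
  ultimately have h: "0 \<le> h" "h \<le> 2 * D\<^sup>2"
    unfolding h_def by (auto intro: infsum_jump_excess_nonneg infsum_jump_excess_le_sq)
  note est = exp_add_sub_one_le[OF D h]
  have "stieltjes_exp v = stieltjes_exp s * exp (D + h)"
    using infsum_jump_excess_split[of s v] assms
    unfolding stieltjes_exp_def D_def h_def by (simp flip: exp_add)
  then have "stieltjes_exp v - stieltjes_exp s - stieltjes_exp s * D = stieltjes_exp s * (exp (D + h) - 1 - D)"
    by (simp add: algebra_simps)
  then have "\<bar>stieltjes_exp v - stieltjes_exp s - stieltjes_exp s * D\<bar>
      = stieltjes_exp s * (exp (D + h) - 1 - D)"
    using est(1) stieltjes_exp_pos[of s] by (simp add: abs_mult)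
  also have "\<dots> \<le> stieltjes_exp s * (5 * D\<^sup>2)"
    using est(2) stieltjes_exp_pos[of s] by (intro mult_left_mono) simp_all
  finally show ?thesis unfolding D_def by simp
qed

lemma stieltjes_exp_increment_left:
  assumes "0 \<le> u" "u < s" "s \<le> T" "Lim (at_left s) g - g u \<le> 1/3"
  shows "\<bar>stieltjes_exp s - stieltjes_exp u - stieltjes_exp s * (g s - g u)\<bar>
    \<le> 5 * stieltjes_exp s * (Lim (at_left s) g - g u) * (g s - g u)"
proof -
  define \<Delta> d k where "\<Delta> = left_jump g s" and "d = Lim (at_left s) g - g u"
    and "k = infsum jump_excess {u<..<s}"
  have \<Delta>: "0 \<le> \<Delta>" "\<Delta> \<le> 1/2" using left_jump_bounds assms unfolding \<Delta>_def by auto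
  have d: "0 \<le> d" "d \<le> 1/3" using mono_on_le_Lim_at_left[OF mono assms(1-3)] assms unfolding d_def by auto
  have "sum (left_jump g) F \<le> d" if "finite F" "F \<subseteq> {u<..<s}" for F
    using sum_left_jump_le_Lim[OF mono_on_subinterval[of u s] _ that] assms unfolding d_def by auto
  moreover have "{u<..<s} \<subseteq> {0<..T}" using assms by auto
  ultimately have k: "0 \<le> k" "k \<le> 2 * d\<^sup>2"
    unfolding k_def by (auto intro: infsum_jump_excess_nonneg infsum_jump_excess_le_sq)
  have increment: "g s - g u = \<Delta> + d" unfolding \<Delta>_def d_def left_jump_def by simp
  have "infsum jump_excess {0<..s} = infsum jump_excess {0<..u} + jump_correction \<Delta> + k"
    using infsum_jump_excess_split[of u s] infsum_jump_excess_insert[of u s] assms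
    unfolding k_def \<Delta>_def jump_excess_def by simp
  then have "g u - g 0 + infsum jump_excess {0<..u}
      = (g s - g 0 + infsum jump_excess {0<..s}) + ln (1 - \<Delta>) + - (d + k)"
    using increment unfolding jump_correction_def by simp
  then have "stieltjes_exp u = stieltjes_exp s * exp (ln (1 - \<Delta>)) * exp (- (d + k))"
    unfolding stieltjes_exp_def by (simp only: exp_add)
  also have "\<dots> = stieltjes_exp s * ((1 - \<Delta>) * exp (- (d + k)))" using \<Delta> by simp
  finally have "stieltjes_exp s - stieltjes_exp u - stieltjes_exp s * (g s - g u)
      = stieltjes_exp s * (1 - \<Delta> - d - (1 - \<Delta>) * exp (- (d + k)))"
    unfolding increment by (simp add: algebra_simps)
  then have "\<bar>stieltjes_exp s - stieltjes_exp u - stieltjes_exp s * (g s - g u)\<bar>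
      = stieltjes_exp s * \<bar>1 - \<Delta> - d - (1 - \<Delta>) * exp (- (d + k))\<bar>"
    using stieltjes_exp_pos[of s] by (simp add: abs_mult)
  also have "\<dots> \<le> stieltjes_exp s * (5 * d * (d + \<Delta>))"
    using one_sub_mult_exp_abs_le[OF \<Delta> d k] stieltjes_exp_pos[of s] by (intro mult_left_mono) simp_all
  finally show ?thesis unfolding increment d_def by (simp add: algebra_simps)
qed

lemma stieltjes_exp_increment:
  assumes "0 \<le> u" "u \<le> s" "s \<le> v" "v \<le> T" "\<theta> \<le> 1/3"
    and right: "s < v \<Longrightarrow> g v - g s \<le> \<theta>"
    and left: "u < s \<Longrightarrow> Lim (at_left s) g - g u \<le> \<theta>"
  shows "\<bar>stieltjes_exp v - stieltjes_exp u - stieltjes_exp s * (g v - g u)\<bar>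
    \<le> 5 * exp (2 * (g T - g 0)) * \<theta> * (g v - g u)"
proof -
  define Y where "Y = exp (2 * (g T - g 0))"
  have y: "0 < stieltjes_exp s" "stieltjes_exp s \<le> Y"
    using stieltjes_exp_pos stieltjes_exp_bounds(2)[of s] assms unfolding Y_def by auto
  have R: "\<bar>stieltjes_exp v - stieltjes_exp s - stieltjes_exp s * (g v - g s)\<bar> \<le> 5 * Y * \<theta> * (g v - g s)"
  proof (cases "s < v")
    case True
    define D where "D = g v - g s"
    have D: "0 \<le> D" "D \<le> \<theta>" using g_mono[of s v] right[OF True] assms unfolding D_def by auto
    have "stieltjes_exp s * D \<le> Y * \<theta>" using y D by (intro mult_mono) simp_all
    then have "stieltjes_exp s * D * D \<le> Y * \<theta> * D" using D(1) by (rule mult_right_mono)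
    then have "5 * stieltjes_exp s * D\<^sup>2 \<le> 5 * Y * \<theta> * D" by (simp add: power2_eq_square mult.assoc)
    then show ?thesis
      using stieltjes_exp_increment_right[of s v] D assms unfolding D_def by linarith
  qed (use assms in simp)
  have L: "\<bar>stieltjes_exp s - stieltjes_exp u - stieltjes_exp s * (g s - g u)\<bar> \<le> 5 * Y * \<theta> * (g s - g u)"
  proof (cases "u < s")
    case True
    have d: "0 \<le> Lim (at_left s) g - g u" "Lim (at_left s) g - g u \<le> \<theta>"
      using mono_on_le_Lim_at_left[OF mono, of u s] left[OF True] True assms by auto
    have "0 \<le> g s - g u" using g_mono[of u s] assms by simp
    have "stieltjes_exp s * (Lim (at_left s) g - g u) \<le> Y * \<theta>" using y d by (intro mult_mono) simp_all
    then have "stieltjes_exp s * (Lim (at_left s) g - g u) * (g s - g u) \<le> Y * \<theta> * (g s - g u)"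
      using \<open>0 \<le> g s - g u\<close> by (rule mult_right_mono)
    then have "5 * stieltjes_exp s * (Lim (at_left s) g - g u) * (g s - g u) \<le> 5 * Y * \<theta> * (g s - g u)"
      by (simp add: mult.assoc)
    then show ?thesis
      using stieltjes_exp_increment_left[of u s] d True assms by linarith
  qed (use assms in simp)
  have "stieltjes_exp v - stieltjes_exp u - stieltjes_exp s * (g v - g u)
      = (stieltjes_exp v - stieltjes_exp s - stieltjes_exp s * (g v - g s))
        + (stieltjes_exp s - stieltjes_exp u - stieltjes_exp s * (g s - g u))"
    by (simp add: algebra_simps)
  then have "\<bar>stieltjes_exp v - stieltjes_exp u - stieltjes_exp s * (g v - g u)\<bar>
      \<le> 5 * Y * \<theta> * (g v - g s) + 5 * Y * \<theta> * (g s - g u)"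
    using R L by linarith
  then show ?thesis unfolding Y_def by (simp add: algebra_simps)
qed

lemma right_increment_small:
  assumes "s \<in> {0..<T}" "0 < \<theta>"
  shows "\<exists>d>0. \<forall>v. s < v \<and> v < s + d \<longrightarrow> g v - g s < \<theta>"
proof -
  have "(g \<longlongrightarrow> g s) (at_right s)" using right_cont assms(1) by (simp add: continuous_within)
  then have "\<forall>\<^sub>F v in at_right s. dist (g v) (g s) < \<theta>" using assms(2) by (rule tendstoD)
  then obtain b where "s < b" "\<forall>v>s. v < b \<longrightarrow> dist (g v) (g s) < \<theta>"
    unfolding eventually_at_right_field by blast
  then show ?thesis by (intro exI[of _ "b - s"]) (auto simp: dist_real_def abs_less_iff)
qed

lemma left_increment_small:
  assumes "s \<in> {0<..T}" "0 < \<theta>"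
  shows "\<exists>d>0. \<forall>u. s - d < u \<and> u < s \<longrightarrow> Lim (at_left s) g - g u < \<theta>"
proof -
  have "\<exists>u\<in>{0..<s}. Lim (at_left s) g - \<theta> < g u"
    using mono_on_Lim_at_left_approx[OF mono _ _ assms(2)] assms(1) by simp
  then obtain u0 where u0: "u0 \<in> {0..<s}" "Lim (at_left s) g - \<theta> < g u0" by blast
  have "g u0 \<le> g u" if "u0 < u" "u < s" for u using g_mono u0(1) that assms(1) by auto
  then show ?thesis using u0 by (intro exI[of _ "s - u0"]) force
qed

lemma small_oscillation_gauge:
  assumes "0 < \<theta>"
  obtains \<delta> where "\<forall>s\<in>{0..T}. 0 < \<delta> s"
    "\<And>s v. s \<in> {0..<T} \<Longrightarrow> s < v \<Longrightarrow> v < s + \<delta> s \<Longrightarrow> g v - g s < \<theta>"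
    "\<And>s u. s \<in> {0<..T} \<Longrightarrow> s - \<delta> s < u \<Longrightarrow> u < s \<Longrightarrow> Lim (at_left s) g - g u < \<theta>"
proof -
  have "\<exists>d>0. (s \<in> {0..<T} \<longrightarrow> (\<forall>v. s < v \<and> v < s + d \<longrightarrow> g v - g s < \<theta>)) \<and>
      (s \<in> {0<..T} \<longrightarrow> (\<forall>u. s - d < u \<and> u < s \<longrightarrow> Lim (at_left s) g - g u < \<theta>))" for s
  proof -
    obtain d1 where d1: "0 < d1" "s \<in> {0..<T} \<Longrightarrow> \<forall>v. s < v \<and> v < s + d1 \<longrightarrow> g v - g s < \<theta>"
      using right_increment_small[OF _ assms, of s] zero_less_one by (cases "s \<in> {0..<T}") blast+
    obtain d2 where d2: "0 < d2"
      "s \<in> {0<..T} \<Longrightarrow> \<forall>u. s - d2 < u \<and> u < s \<longrightarrow> Lim (at_left s) g - g u < \<theta>"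
      using left_increment_small[OF _ assms, of s] zero_less_one by (cases "s \<in> {0<..T}") blast+
    show ?thesis using d1 d2 by (intro exI[of _ "min d1 d2"]) auto
  qed
  then obtain \<delta> where "\<forall>s. 0 < \<delta> s \<and>
      (s \<in> {0..<T} \<longrightarrow> (\<forall>v. s < v \<and> v < s + \<delta> s \<longrightarrow> g v - g s < \<theta>)) \<and>
      (s \<in> {0<..T} \<longrightarrow> (\<forall>u. s - \<delta> s < u \<and> u < s \<longrightarrow> Lim (at_left s) g - g u < \<theta>))"
    by metis
  then show ?thesis using that by blast
qed

lemma stieltjes_exp_has_integral:
  assumes "0 \<le> b" "b \<le> T"
  shows "kurzweil_has_integral stieltjes_exp g 0 b (stieltjes_exp b - 1)"
  unfolding kurzweil_has_integral_def
proof (intro allI impI)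
  fix \<epsilon> :: real assume "0 < \<epsilon>"
  define Y where "Y = exp (2 * (g T - g 0))"
  define \<eta> where "\<eta> = \<epsilon> / (g T - g 0 + 1)"
  define \<theta> where "\<theta> = min (1/3) (\<eta> / (5 * Y))"
  have "g 0 \<le> g T" using g_mono T_pos by simp
  then have "0 < \<eta>" "1 \<le> Y" using \<open>0 < \<epsilon>\<close> unfolding \<eta>_def Y_def by simp_all
  then have "0 < \<theta>" "\<theta> \<le> 1/3" unfolding \<theta>_def by auto
  have "\<theta> \<le> \<eta> / (5 * Y)" unfolding \<theta>_def by simp
  then have "5 * Y * \<theta> \<le> \<eta>" using \<open>1 \<le> Y\<close> by (simp add: field_simps)
  note \<theta> = \<open>0 < \<theta>\<close> \<open>\<theta> \<le> 1/3\<close> this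
  obtain \<delta> where \<delta>: "\<forall>s\<in>{0..T}. 0 < \<delta> s"
    "\<And>s v. s \<in> {0..<T} \<Longrightarrow> s < v \<Longrightarrow> v < s + \<delta> s \<Longrightarrow> g v - g s < \<theta>"
    "\<And>s u. s \<in> {0<..T} \<Longrightarrow> s - \<delta> s < u \<Longrightarrow> u < s \<Longrightarrow> Lim (at_left s) g - g u < \<theta>"
    using small_oscillation_gauge[OF \<theta>(1)] by blast
  show "\<exists>\<delta>. (\<forall>s\<in>{0..b}. 0 < \<delta> s) \<and> (\<forall>m t \<tau>. kurzweil_fine \<delta> 0 b m t \<tau> \<longrightarrow>
      \<bar>stieltjes_exp b - 1 - (\<Sum>j = 1..m. stieltjes_exp (\<tau> j) * (g (t j) - g (t (j - 1))))\<bar> < \<epsilon>)"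
  proof (intro exI[of _ \<delta>] conjI allI impI)
    show "\<forall>s\<in>{0..b}. 0 < \<delta> s" using \<delta>(1) assms by simp
    fix m t \<tau> assume fine: "kurzweil_fine \<delta> 0 b m t \<tau>"
    have local: "\<bar>stieltjes_exp (t j) - stieltjes_exp (t (j - 1)) - stieltjes_exp (\<tau> j) * (g (t j) - g (t (j - 1)))\<bar>
        \<le> \<eta> * (g (t j) - g (t (j - 1)))" if j: "j \<in> {1..m}" for j
    proof -
      note tag = kurzweil_fine_tagD[OF fine j]
      have pts: "0 \<le> t (j - 1)" "t j \<le> T"
        using kurzweil_fine_points_bounds[OF fine, of "j - 1"] kurzweil_fine_points_bounds[OF fine, of j] j assms
        by auto
      have "\<bar>stieltjes_exp (t j) - stieltjes_exp (t (j - 1)) - stieltjes_exp (\<tau> j) * (g (t j) - g (t (j - 1)))\<bar>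
          \<le> 5 * Y * \<theta> * (g (t j) - g (t (j - 1)))"
        unfolding Y_def
      proof (rule stieltjes_exp_increment)
        show "g (t j) - g (\<tau> j) \<le> \<theta>" if "\<tau> j < t j"
          using \<delta>(2)[of "\<tau> j" "t j"] tag pts that by force
        show "Lim (at_left (\<tau> j)) g - g (t (j - 1)) \<le> \<theta>" if "t (j - 1) < \<tau> j"
          using \<delta>(3)[of "\<tau> j" "t (j - 1)"] tag pts that by force
      qed (use tag pts \<theta> in auto)
      also have "\<dots> \<le> \<eta> * (g (t j) - g (t (j - 1)))"
        using \<theta>(3) g_mono[of "t (j - 1)" "t j"] tag pts by (intro mult_right_mono) auto
      finally show ?thesis .
    qed
    have "stieltjes_exp b - 1 - (\<Sum>j = 1..m. stieltjes_exp (\<tau> j) * (g (t j) - g (t (j - 1))))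
        = (\<Sum>j = 1..m. stieltjes_exp (t j) - stieltjes_exp (t (j - 1))
            - stieltjes_exp (\<tau> j) * (g (t j) - g (t (j - 1))))"
      using sum_telescope''[of 0 m "\<lambda>j. stieltjes_exp (t j)"] fine stieltjes_exp_0
      unfolding kurzweil_fine_def by (simp add: sum_subtractf)
    then have "\<bar>stieltjes_exp b - 1 - (\<Sum>j = 1..m. stieltjes_exp (\<tau> j) * (g (t j) - g (t (j - 1))))\<bar>
        = \<bar>\<Sum>j = 1..m. stieltjes_exp (t j) - stieltjes_exp (t (j - 1))
            - stieltjes_exp (\<tau> j) * (g (t j) - g (t (j - 1)))\<bar>" by simp
    also have "\<dots> \<le> (\<Sum>j = 1..m. \<eta> * (g (t j) - g (t (j - 1))))"
      using local by (rule order_trans[OF sum_abs sum_mono])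
    also have "\<dots> = \<eta> * (g b - g 0)"
      using sum_telescope''[of 0 m "\<lambda>j. g (t j)"] fine
      unfolding kurzweil_fine_def by (simp add: sum_distrib_left[symmetric])
    also have "\<dots> \<le> \<eta> * (g T - g 0)" using g_mono assms \<open>0 < \<eta>\<close> by (intro mult_left_mono) simp_all
    also have "\<dots> < \<epsilon>" unfolding \<eta>_def using \<open>0 < \<epsilon>\<close> \<open>g 0 \<le> g T\<close> by (simp add: field_simps)
    finally show "\<bar>stieltjes_exp b - 1 - (\<Sum>j = 1..m. stieltjes_exp (\<tau> j) * (g (t j) - g (t (j - 1))))\<bar> < \<epsilon>" .
  qed
qed

subsection \<open>Uniqueness\<close>

lemma homogeneous_vanishes_at:
  assumes int: "\<forall>t\<in>{0..T}. kurzweil_has_integral w g 0 t (w t)"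
    and "0 \<le> c" "c \<le> T" and before: "\<forall>x\<in>{0..<c}. w x = 0"
  shows "w c = 0"
proof (cases "c = 0")
  case True
  then show ?thesis using int kurzweil_has_integral_degenerate[of w g 0 "w 0"] T_pos by simp
next
  case False
  then have "0 < c" using \<open>0 \<le> c\<close> by simp
  have "\<exists>r\<in>{0..<c}. Lim (at_left c) g - 1/4 < g r"
    using mono_on_Lim_at_left_approx[OF mono \<open>0 < c\<close> \<open>c \<le> T\<close>] by simp
  then obtain r where r: "r \<in> {0..<c}" "Lim (at_left c) g - 1/4 < g r" by blast
  moreover have "left_jump g c \<le> 1/2" using small_jumps \<open>0 < c\<close> \<open>c \<le> T\<close> by simp
  ultimately have "g c - g r \<le> 3/4" unfolding left_jump_def by linarith
  have "kurzweil_has_integral w g 0 c (w c)" using int \<open>0 \<le> c\<close> \<open>c \<le> T\<close> by simp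
  moreover have "\<forall>x\<in>{c..c}. \<bar>w x\<bar> \<le> \<bar>w c\<bar>" by simp
  ultimately have "\<bar>w c\<bar> \<le> \<bar>w c\<bar> * (g c - g r)"
    using kurzweil_has_integral_abs_le[OF _ mono_on_subinterval[of 0 c] _ _ order_refl before] r \<open>c \<le> T\<close>
    by simp
  also have "\<dots> \<le> \<bar>w c\<bar> * (3/4)" using \<open>g c - g r \<le> 3/4\<close> by (intro mult_left_mono) simp_all
  finally show ?thesis by simp
qed

lemma homogeneous_vanishes_right:
  assumes int: "\<forall>t\<in>{0..T}. kurzweil_has_integral w g 0 t (w t)"
    and bound: "\<forall>x\<in>{0..T}. \<bar>w x\<bar> \<le> B"
    and "0 \<le> c" "c < T" and vanish: "\<forall>x\<in>{0..c}. w x = 0"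
  shows "\<exists>t1>c. \<forall>x\<in>{c..t1}. w x = 0"
proof -
  have "c \<in> {0..<T}" using assms by simp
  then obtain d where "0 < d" and d: "\<forall>v. c < v \<and> v < c + d \<longrightarrow> g v - g c < 1/2"
    using right_increment_small[of c "1/2"] by auto
  define t1 where "t1 = min T (c + d / 2)"
  have t1: "c < t1" "t1 \<le> T" using \<open>c < T\<close> \<open>0 < d\<close> unfolding t1_def by auto
  define M where "M = Sup ((\<lambda>x. \<bar>w x\<bar>) ` {c..t1})"
  have "bdd_above ((\<lambda>x. \<bar>w x\<bar>) ` {c..t1})"
    using bound t1 \<open>0 \<le> c\<close> by (intro bdd_aboveI[of _ B]) auto
  then have le_M: "\<bar>w x\<bar> \<le> M" if "x \<in> {c..t1}" for x unfolding M_def using that by (auto intro: cSup_upper)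
  have "\<bar>w c\<bar> \<le> M" using le_M t1 by simp
  then have "0 \<le> M" using abs_ge_zero[of "w c"] by linarith
  \<comment> \<open>On [c, t1] the integral equation gives the contraction |w x| \<le> M (g x - g c) \<le> M/2.\<close>
  have half: "\<bar>w x\<bar> \<le> M / 2" if x: "x \<in> {c..t1}" for x
  proof (cases "x = c")
    case True
    then show ?thesis using vanish \<open>0 \<le> c\<close> \<open>0 \<le> M\<close> by simp
  next
    case False
    then have "c < x" using x by simp
    have "kurzweil_has_integral w g 0 x (w x)" using int x t1 \<open>0 \<le> c\<close> by simp
    moreover have "mono_on {0..x} g" using mono_on_subinterval x t1 by simp
    moreover have "\<forall>y\<in>{0..<c}. w y = 0" "\<forall>y\<in>{c..x}. \<bar>w y\<bar> \<le> M" "w c = 0"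
      using vanish le_M x \<open>0 \<le> c\<close> by auto
    ultimately have "\<bar>w x\<bar> \<le> M * (g x - g c)"
      using kurzweil_has_integral_abs_le[of w g 0 x "w x" c c M] \<open>0 \<le> c\<close> \<open>c < x\<close> by simp
    also have "\<dots> \<le> M * (1/2)"
      using d \<open>c < x\<close> x \<open>0 \<le> M\<close> unfolding t1_def by (intro mult_left_mono) auto
    finally show ?thesis by simp
  qed
  have "Sup ((\<lambda>x. \<bar>w x\<bar>) ` {c..t1}) \<le> M / 2" using half t1 by (intro cSup_least) auto
  then have "M \<le> M / 2" by (simp add: M_def)
  then have "M \<le> 0" by simp
  then have "\<forall>x\<in>{c..t1}. w x = 0" using le_M by (metis abs_le_zero_iff order.trans)
  with t1 show ?thesis by blast
qed

lemma homogeneous_eq_0: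
  assumes int: "\<forall>t\<in>{0..T}. kurzweil_has_integral w g 0 t (w t)"
    and bound: "\<forall>x\<in>{0..T}. \<bar>w x\<bar> \<le> B"
  shows "\<forall>x\<in>{0..T}. w x = 0"
proof (rule ccontr)
  assume "\<not> (\<forall>x\<in>{0..T}. w x = 0)"
  define S where "S = {x\<in>{0..T}. w x \<noteq> 0}"
  define c where "c = Inf S"
  obtain x0 where "x0 \<in> S" using \<open>\<not> (\<forall>x\<in>{0..T}. w x = 0)\<close> unfolding S_def by auto
  have "bdd_below S" unfolding S_def by (rule bdd_belowI[of _ 0]) auto
  then have c_le: "c \<le> x" if "x \<in> S" for x unfolding c_def using that by (intro cInf_lower)
  have "0 \<le> c" unfolding c_def using \<open>x0 \<in> S\<close> by (intro cInf_greatest) (auto simp: S_def)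
  have "x0 \<le> T" using \<open>x0 \<in> S\<close> unfolding S_def by simp
  then have "c \<le> T" using c_le[OF \<open>x0 \<in> S\<close>] by linarith
  have before: "\<forall>x\<in>{0..<c}. w x = 0"
  proof (rule ballI, rule ccontr)
    fix x assume "x \<in> {0..<c}" "w x \<noteq> 0"
    then have "x \<in> S" using \<open>c \<le> T\<close> unfolding S_def by auto
    then show False using c_le \<open>x \<in> {0..<c}\<close> by force
  qed
  then have "w c = 0" using homogeneous_vanishes_at[OF int \<open>0 \<le> c\<close> \<open>c \<le> T\<close>] by simp
  then have "x0 \<noteq> c" using \<open>x0 \<in> S\<close> unfolding S_def by auto
  then have "c < x0" using c_le[OF \<open>x0 \<in> S\<close>] by (simp add: less_le)
  then have "c < T" using \<open>x0 \<in> S\<close> unfolding S_def by simp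
  moreover have "\<forall>x\<in>{0..c}. w x = 0" using before \<open>w c = 0\<close> by auto
  ultimately obtain t1 where t1: "c < t1" "\<forall>x\<in>{c..t1}. w x = 0"
    using homogeneous_vanishes_right[OF int bound \<open>0 \<le> c\<close>] by blast
  have "S \<noteq> {}" using \<open>x0 \<in> S\<close> by auto
  then obtain x where x: "x \<in> S" "x < t1"
    using cInf_less_iff[OF _ \<open>bdd_below S\<close>] t1(1) unfolding c_def by blast
  then have "w x = 0" using t1(2) c_le[OF x(1)] by simp
  then show False using x(1) unfolding S_def by simp
qed

lemma bounded_solutions_eq:
  assumes "\<forall>t\<in>{0..T}. kurzweil_has_integral z1 g 0 t (z1 t - 1)"
    and "\<forall>t\<in>{0..T}. kurzweil_has_integral z2 g 0 t (z2 t - 1)"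
    and "\<forall>x\<in>{0..T}. \<bar>z1 x\<bar> \<le> B1" "\<forall>x\<in>{0..T}. \<bar>z2 x\<bar> \<le> B2"
  shows "\<forall>t\<in>{0..T}. z1 t = z2 t"
proof -
  have "\<forall>t\<in>{0..T}. kurzweil_has_integral (\<lambda>x. z1 x - z2 x) g 0 t (z1 t - z2 t)"
  proof
    fix t assume "t \<in> {0..T}"
    then have "kurzweil_has_integral (\<lambda>x. z1 x - z2 x) g 0 t ((z1 t - 1) - (z2 t - 1))"
      using kurzweil_has_integral_diff[OF bspec[OF assms(1)] bspec[OF assms(2)]] by blast
    then show "kurzweil_has_integral (\<lambda>x. z1 x - z2 x) g 0 t (z1 t - z2 t)" by simp
  qed
  moreover have "\<forall>x\<in>{0..T}. \<bar>z1 x - z2 x\<bar> \<le> B1 + B2"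
  proof
    fix x assume "x \<in> {0..T}"
    then have "\<bar>z1 x\<bar> \<le> B1" "\<bar>z2 x\<bar> \<le> B2" using assms(3,4) by auto
    then show "\<bar>z1 x - z2 x\<bar> \<le> B1 + B2" using abs_triangle_ineq4[of "z1 x" "z2 x"] by simp
  qed
  ultimately have "\<forall>x\<in>{0..T}. z1 x - z2 x = 0" by (rule homogeneous_eq_0)
  then show ?thesis by simp
qed

end

theorem lemmaA10:
  fixes T :: real and g :: "real \<Rightarrow> real"
  assumes "T > 0"
    and "mono_on {0..T} g"
    and "\<forall>t\<in>{0..<T}. continuous (at_right t) g"
    and "\<forall>t\<in>{0<..T}. g t - Lim (at_left t) g \<le> 1/2"
  shows "\<exists>y. ((\<forall>t\<in>{0..T}. y t \<ge> 1) \<and> mono_on {0..T} y \<and>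
              (\<forall>t\<in>{0..<T}. continuous (at_right t) y) \<and>
              (\<forall>t\<in>{0..T}. kurzweil_has_integral y g 0 t (y t - 1)))
           \<and> (\<forall>z. ((\<forall>t\<in>{0..T}. z t \<ge> 1) \<and> mono_on {0..T} z \<and>
                    (\<forall>t\<in>{0..<T}. continuous (at_right t) z) \<and>
                    (\<forall>t\<in>{0..T}. kurzweil_has_integral z g 0 t (z t - 1)))
                   \<longrightarrow> (\<forall>t\<in>{0..T}. z t = y t))
           \<and> (\<forall>t\<in>{0..T}. y t \<le> exp (2 * (g T - g 0)))"
proof -
  interpret small_jump_integrator g T
    using assms by unfold_locales (auto simp: left_jump_def)
  have solution: "(\<forall>t\<in>{0..T}. stieltjes_exp t \<ge> 1) \<and> mono_on {0..T} stieltjes_exp \<and>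
      (\<forall>t\<in>{0..<T}. continuous (at_right t) stieltjes_exp) \<and>
      (\<forall>t\<in>{0..T}. kurzweil_has_integral stieltjes_exp g 0 t (stieltjes_exp t - 1))"
    using stieltjes_exp_bounds(1) stieltjes_exp_mono stieltjes_exp_continuous_at_right
      stieltjes_exp_has_integral by auto
  have bounded: "\<forall>x\<in>{0..T}. \<bar>stieltjes_exp x\<bar> \<le> exp (2 * (g T - g 0))"
    using stieltjes_exp_bounds by fastforce
  have "\<forall>t\<in>{0..T}. z t = stieltjes_exp t"
    if z: "(\<forall>t\<in>{0..T}. z t \<ge> 1) \<and> mono_on {0..T} z \<and>
      (\<forall>t\<in>{0..<T}. continuous (at_right t) z) \<and> (\<forall>t\<in>{0..T}. kurzweil_has_integral z g 0 t (z t - 1))"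
    for z
  proof -
    have "\<bar>z x\<bar> \<le> z T" if "x \<in> {0..T}" for x
    proof -
      have "1 \<le> z x" using z that by blast
      moreover have "z x \<le> z T" using z mono_onD[of "{0..T}" z x T] that assms(1) by auto
      ultimately show ?thesis by simp
    qed
    moreover have "\<forall>t\<in>{0..T}. kurzweil_has_integral z g 0 t (z t - 1)" using z by blast
    ultimately show ?thesis using bounded_solutions_eq[OF _ _ _ bounded] solution by blast
  qed
  moreover have "\<forall>t\<in>{0..T}. stieltjes_exp t \<le> exp (2 * (g T - g 0))"
    using stieltjes_exp_bounds(2) by simp
  ultimately show ?thesis using solution by blast
qed

end
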